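(* Let $Q:(-\infty,-1)\to(-\infty,0)$ be the inverse of the strictly increasing function $G\mapsto G-e^G$ on $(-\infty,0)$, and define $R:\mathbb{R}\to\mathbb{R}$ by $R(V)=-2(1-e^{Q(V)})^2$ for $V<-1$ and $R(V)=4(V+1)$ for $V\ge -1$. Fix $m<-1$. For $n\in\mathbb{R}$ let $V(t;n)$ denote the unique solution of the initial value problem $$V''+3V'=R(V),\ t>0,\qquad V(0)=m,\quad V'(0)=n,$$ (prime denoting $d/dt$, and $V_t=dV/dt$), defined on its interval of existence. Define $\beta^-=\{n\in\mathbb{R}: \text{there exists } t>0 \text{ with } V_t(t;n)<0\}$, $\beta^0=\{n\in\mathbb{R}: V_t(t;n)>0 \text{ and } V(t;n)\le -1 \text{ for all } t>0\}$, $\beta^+=\{n\in\mathbb{R}: V_t(t;n)>0 \text{ for all } t\ge 0 \text{ and } V(t;n)>-1 \text{ for some } t>0\}$. Then $\mathbb{R}$ is the disjoint union $\mathbb{R}=\beta^-\cup\beta^0\cup\beta^+$.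
   Context: The function $R$ is differentiable on $\mathbb{R}$. *)

theory Defs
  imports "HOL-Analysis.Analysis"
begin

definition Qinv :: "real \<Rightarrow> real" where
  "Qinv V = (THE G. G < 0 \<and> G - exp G = V)"

definition Rfun :: "real \<Rightarrow> real" where
  "Rfun V = (if V < -1 then -2 * (1 - exp (Qinv V))^2 else 4 * (V + 1))"

text \<open>A solution of V'' + 3V' = R(V) (t>0), V(0)=m, V'(0)=n on [0,T), T \<in> (0,\<infinity>].
  W is the derivative V_t.\<close>
definition is_sol :: "real \<Rightarrow> real \<Rightarrow> ereal \<Rightarrow> (real \<Rightarrow> real) \<Rightarrow> (real \<Rightarrow> real) \<Rightarrow> bool" where
  "is_sol m n T V W \<longleftrightarrow> 0 < T \<and> V 0 = m \<and> W 0 = n \<and>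
     (\<forall>t. 0 \<le> t \<and> ereal t < T \<longrightarrow>
        (V has_real_derivative W t) (at t within {0..}) \<and> continuous (at t within {0..}) W) \<and>
     (\<forall>t. 0 < t \<and> ereal t < T \<longrightarrow>
        (W has_real_derivative (Rfun (V t) - 3 * W t)) (at t))"

text \<open>Maximal solution (solution on its interval of existence): every solution lives on a
  subinterval and agrees with it there.\<close>
definition max_sol :: "real \<Rightarrow> real \<Rightarrow> ereal \<Rightarrow> (real \<Rightarrow> real) \<Rightarrow> (real \<Rightarrow> real) \<Rightarrow> bool" where
  "max_sol m n T V W \<longleftrightarrow> is_sol m n T V W \<and>
     (\<forall>T' V' W'. is_sol m n T' V' W' \<longrightarrow> T' \<le> T \<and>
        (\<forall>t. 0 \<le> t \<and> ereal t < T' \<longrightarrow> V' t = V t \<and> W' t = W t))"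

definition beta_minus :: "real \<Rightarrow> real set" where
  "beta_minus m = {n. \<exists>T V W. max_sol m n T V W \<and> (\<exists>t>0. ereal t < T \<and> W t < 0)}"

definition beta_zero :: "real \<Rightarrow> real set" where
  "beta_zero m = {n. \<exists>T V W. max_sol m n T V W \<and>
      (\<forall>t>0. ereal t < T \<longrightarrow> W t > 0 \<and> V t \<le> -1)}"

definition beta_plus :: "real \<Rightarrow> real set" where
  "beta_plus m = {n. \<exists>T V W. max_sol m n T V W \<and>
      (\<forall>t\<ge>0. ereal t < T \<longrightarrow> W t > 0) \<and> (\<exists>t>0. ereal t < T \<and> V t > -1)}"

end

theory Submission
  imports Defs
begin

text \<open>Write the equation as the first-order system \<open>(V, W)' = (W, R(V) - 3 W)\<close>. Since \<open>R\<close> is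
  nondecreasing and 4-Lipschitz, this system is globally Lipschitz, so the initial value problem has a
  unique solution on all of \<open>[0, \<infinity>)\<close> (Picard iteration on intervals of fixed length), and this is the
  maximal solution. The three classes are then disjoint by definition. They cover \<open>\<real>\<close> because for
  \<open>m < -1\<close> the velocity \<open>W\<close> cannot vanish without becoming negative: at a zero of \<open>W\<close> with \<open>V < -1\<close>
  (in particular at \<open>t = 0\<close>) resp. \<open>V > -1\<close> the sign of \<open>R(V)\<close> makes \<open>W\<close> negative just after
  resp. just before, and \<open>V = -1\<close> would put the trajectory on the equilibrium \<open>(-1, 0)\<close>, which by
  backward uniqueness it cannot reach.\<close>

section \<open>The nonlinearity \<open>R\<close>\<close>

lemma strict_mono_on_minus_exp: "strict_mono_on {..0} (\<lambda>G::real. G - exp G)"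
proof (rule strict_mono_onI)
  fix q1 q2 :: real assume q: "q1 \<in> {..0}" "q2 \<in> {..0}" "q1 < q2"
  obtain z where z: "q1 < z" "z < q2" "exp q2 - exp q1 = (q2 - q1) * exp z"
    using MVT2[of q1 q2 exp exp] q by (auto intro: DERIV_exp)
  have "(q2 - q1) * exp z < (q2 - q1) * 1"
    using z q by (intro mult_strict_left_mono) auto
  with z(3) have "exp q2 - exp q1 < q2 - q1" by simp
  then show "q1 - exp q1 < q2 - exp q2" by simp
qed

lemma Qinv_inverse:
  assumes "V < -1"
  shows "Qinv V < 0" "Qinv V - exp (Qinv V) = V"
proof -
  obtain G where G: "V \<le> G" "G \<le> 0" "G - exp G = V"
    using IVT[of "\<lambda>G. G - exp G" V V 0] assms by (auto intro!: continuous_intros)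
  with assms have "G < 0" by (cases "G = 0") auto
  have "\<exists>!G. G < 0 \<and> G - exp G = V"
  proof (rule ex1I[of _ G])
    show "G < 0 \<and> G - exp G = V" using \<open>G < 0\<close> G by simp
    show "y = G" if "y < 0 \<and> y - exp y = V" for y
      using strict_mono_on_eqD[OF strict_mono_on_minus_exp, of y G] that G \<open>G < 0\<close> by auto
  qed
  from theI'[OF this] show "Qinv V < 0" "Qinv V - exp (Qinv V) = V"
    unfolding Qinv_def by auto
qed

lemma Qinv_mono: "a \<le> b \<Longrightarrow> b < -1 \<Longrightarrow> Qinv a \<le> Qinv b"
  using strict_mono_on_less[OF strict_mono_on_minus_exp, of "Qinv b" "Qinv a"]
    Qinv_inverse[of a] Qinv_inverse[of b]
  by (force simp: not_le[symmetric])

text \<open>In the variable \<open>q = Q(V)\<close> we have \<open>dR/dq = 4 (1 - e\<^sup>q) e\<^sup>q\<close> and \<open>dV/dq = 1 - e\<^sup>q\<close>,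
  so \<open>0 < dR/dV = 4 e\<^sup>q \<le> 4\<close>.\<close>
lemma one_minus_exp_power2_increment:
  fixes q1 q2 :: real
  assumes "q1 \<le> q2" "q2 \<le> 0"
  shows "0 \<le> 2 * (1 - exp q1)^2 - 2 * (1 - exp q2)^2"
    and "2 * (1 - exp q1)^2 - 2 * (1 - exp q2)^2 \<le> 4 * ((q2 - exp q2) - (q1 - exp q1))"
proof -
  have "-2 * (1 - exp q1)^2 \<le> -2 * (1 - exp q2)^2"
  proof (rule DERIV_nonneg_imp_increasing_open[OF assms(1)])
    fix q assume "q1 < q" "q < q2"
    with assms have "0 \<le> 4 * (1 - exp q) * exp q" by simp
    moreover have "((\<lambda>q. -2 * (1 - exp q)^2) has_real_derivative 4 * (1 - exp q) * exp q) (at q)"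
      by (auto intro!: derivative_eq_intros simp: algebra_simps)
    ultimately show "\<exists>y. ((\<lambda>q. -2 * (1 - exp q)^2) has_real_derivative y) (at q) \<and> 0 \<le> y"
      by blast
  qed (intro continuous_intros)
  then show "0 \<le> 2 * (1 - exp q1)^2 - 2 * (1 - exp q2)^2" by simp
  have "4 * (q1 - exp q1) + 2 * (1 - exp q1)^2 \<le> 4 * (q2 - exp q2) + 2 * (1 - exp q2)^2"
  proof (rule DERIV_nonneg_imp_increasing_open[OF assms(1)])
    fix q
    have "((\<lambda>q. 4 * (q - exp q) + 2 * (1 - exp q)^2) has_real_derivative 4 * (1 - exp q)^2) (at q)"
      by (auto intro!: derivative_eq_intros simp: algebra_simps power2_eq_square)
    then show "\<exists>y. ((\<lambda>q. 4 * (q - exp q) + 2 * (1 - exp q)^2) has_real_derivative y) (at q) \<and> 0 \<le> y"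
      by auto
  qed (intro continuous_intros)
  then show "2 * (1 - exp q1)^2 - 2 * (1 - exp q2)^2 \<le> 4 * ((q2 - exp q2) - (q1 - exp q1))"
    by simp
qed

lemma Rfun_increment:
  assumes "a \<le> b"
  shows "0 \<le> Rfun b - Rfun a" and "Rfun b - Rfun a \<le> 4 * (b - a)"
proof -
  have "0 \<le> Rfun b - Rfun a \<and> Rfun b - Rfun a \<le> 4 * (b - a)"
  proof (cases "b < -1")
    case True
    with assms have "a < -1" by simp
    with True assms show ?thesis
      using one_minus_exp_power2_increment[OF Qinv_mono[OF assms True]]
        Qinv_inverse[of a] Qinv_inverse[of b]
      by (simp add: Rfun_def)
  next
    case b: False
    show ?thesis
    proof (cases "a < -1")
      case True
      with b show ?thesis
        using one_minus_exp_power2_increment[of "Qinv a" 0] Qinv_inverse[OF True] by (simp add: Rfun_def)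
    qed (use assms b in \<open>simp add: Rfun_def\<close>)
  qed
  then show "0 \<le> Rfun b - Rfun a" "Rfun b - Rfun a \<le> 4 * (b - a)" by auto
qed

lemma Rfun_lipschitz: "\<bar>Rfun a - Rfun b\<bar> \<le> 4 * \<bar>a - b\<bar>"
  using Rfun_increment[of a b] Rfun_increment[of b a] by (cases "a \<le> b") auto

lemma Rfun_neg: "V < -1 \<Longrightarrow> Rfun V < 0"
  using Qinv_inverse(1)[of V] by (simp add: Rfun_def)

lemma Rfun_pos: "V > -1 \<Longrightarrow> Rfun V > 0"
  by (simp add: Rfun_def)

section \<open>Globally Lipschitz autonomous equations\<close>

locale lipschitz_field =
  fixes f :: "'a::banach \<Rightarrow> 'a" and L :: real
  assumes lipschitz: "L-lipschitz_on UNIV f"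
begin

lemma continuous_on_field: "continuous_on S f"
  using lipschitz_on_continuous_on[OF lipschitz] continuous_on_subset by blast

definition step :: real where "step = 1 / (2 * L + 2)"

lemma step_pos: "0 < step"
  using lipschitz_on_nonneg[OF lipschitz] by (simp add: step_def)

lemma lipschitz_times_step: "L * step \<le> 1 / 2"
  using lipschitz_on_nonneg[OF lipschitz] by (simp add: step_def field_simps)

text \<open>Outside \<open>[a, a + step]\<close> the upper limit of integration is clamped, so that the result is a
  bounded continuous function.\<close>
definition picard :: "real \<Rightarrow> 'a \<Rightarrow> (real \<Rightarrow>\<^sub>C 'a) \<Rightarrow> (real \<Rightarrow>\<^sub>C 'a)" where
  "picard a x g = Bcontfun (\<lambda>t. x + integral {a..max a (min (a + step) t)} (\<lambda>s. f (g s)))"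

lemma continuous_on_field_comp: "continuous_on S (\<lambda>s. f (apply_bcontfun g s))"
  by (rule continuous_on_compose2[OF continuous_on_field]) auto

lemma apply_picard:
  "apply_bcontfun (picard a x g) t = x + integral {a..max a (min (a + step) t)} (\<lambda>s. f (g s))"
proof -
  let ?I = "\<lambda>t. x + integral {a..t} (\<lambda>s. f (g s))"
  let ?cl = "\<lambda>t::real. max a (min (a + step) t)"
  have cl: "?cl t \<in> {a..a + step}" for t
    using step_pos by auto
  have I: "continuous_on {a..a + step} ?I"
    by (intro continuous_intros indefinite_integral_continuous_1 integrable_continuous_real
        continuous_on_field_comp)
  have "continuous_on UNIV (\<lambda>t. ?I (?cl t))"
    by (rule continuous_on_compose2[OF I]) (use cl in \<open>auto intro!: continuous_intros\<close>)
  moreover have "bounded (range (\<lambda>t. ?I (?cl t)))"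
    by (rule bounded_subset[OF compact_imp_bounded[OF compact_continuous_image[OF I]]])
      (use cl in auto)
  ultimately have "(\<lambda>t. ?I (?cl t)) \<in> bcontfun"
    by (auto simp: bcontfun_def)
  then show ?thesis
    by (simp add: picard_def Bcontfun_inverse)
qed

lemma picard_contraction: "dist (picard a x g) (picard a x h) \<le> 1 / 2 * dist g h"
proof (rule dist_bound)
  fix t
  define c where "c = max a (min (a + step) t)"
  have c: "a \<le> c" "c - a \<le> step"
    using step_pos by (auto simp: c_def)
  have "dist (picard a x g t) (picard a x h t)
      = norm (integral {a..c} (\<lambda>s. f (g s) - f (h s)))"
    by (simp add: apply_picard c_def dist_norm integral_diff integrable_continuous_real
        continuous_on_field_comp)
  also have "\<dots> \<le> (L * dist g h) * (c - a)"
  proof (rule integral_bound[OF c(1)])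
    show "continuous_on {a..c} (\<lambda>s. f (g s) - f (h s))"
      by (intro continuous_intros continuous_on_field_comp)
    show "norm (f (g s) - f (h s)) \<le> L * dist g h" for s
      using lipschitz_onD[OF lipschitz, of "g s" "h s"] dist_bounded[of g s h]
        lipschitz_on_nonneg[OF lipschitz]
      by (simp add: dist_norm) (meson mult_left_mono order_trans)
  qed
  also have "\<dots> \<le> (L * dist g h) * step"
    using c lipschitz_on_nonneg[OF lipschitz] by (intro mult_left_mono) auto
  also have "\<dots> \<le> 1 / 2 * dist g h"
    using mult_right_mono[OF lipschitz_times_step zero_le_dist[of g h]] by (simp add: algebra_simps)
  finally show "dist (picard a x g t) (picard a x h t) \<le> 1 / 2 * dist g h" .
qed

lemma local_solution_exists:
  "\<exists>u. continuous_on {a..a + step} u \<and>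
     (\<forall>t\<in>{a..a + step}. u t = x + integral {a..t} (\<lambda>s. f (u s)))"
proof -
  obtain g where "picard a x g = g"
    using banach_fix_type[of "1/2" "picard a x"] picard_contraction by auto
  then have "apply_bcontfun g t = x + integral {a..t} (\<lambda>s. f (g s))" if "t \<in> {a..a + step}" for t
    using that by (metis apply_picard atLeastAtMost_iff max.absorb2 min.absorb2)
  then show ?thesis
    by (intro exI[of _ "apply_bcontfun g"]) auto
qed

definition local_solution :: "real \<Rightarrow> 'a \<Rightarrow> real \<Rightarrow> 'a" where
  "local_solution a x = (SOME u. continuous_on {a..a + step} u \<and>
     (\<forall>t\<in>{a..a + step}. u t = x + integral {a..t} (\<lambda>s. f (u s))))"

lemma local_solution:
  "continuous_on {a..a + step} (local_solution a x)"
  "t \<in> {a..a + step} \<Longrightarrow> local_solution a x t = x + integral {a..t} (\<lambda>s. f (local_solution a x s))"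
  using someI_ex[OF local_solution_exists[of a x]] by (auto simp: local_solution_def)

lemma integral_equation_append:
  fixes a b c :: real
  assumes "a \<le> b" "b \<le> c"
    and u: "continuous_on {a..b} u" "\<And>t. t \<in> {a..b} \<Longrightarrow> u t = x + integral {a..t} (\<lambda>s. f (u s))"
    and v: "continuous_on {b..c} v" "\<And>t. t \<in> {b..c} \<Longrightarrow> v t = u b + integral {b..t} (\<lambda>s. f (v s))"
  defines "w \<equiv> \<lambda>t. if t \<le> b then u t else v t"
  shows "continuous_on {a..c} w" and "\<And>t. t \<in> {a..c} \<Longrightarrow> w t = x + integral {a..t} (\<lambda>s. f (w s))"
proof -
  have vb: "v b = u b"
    using v(2)[of b] assms(2) by simp
  show w: "continuous_on {a..c} w"
    unfolding w_def
    by (rule continuous_on_cases_le[where a=b and h=id, simplified])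
      (auto simp: vb intro: continuous_on_subset[OF u(1)] continuous_on_subset[OF v(1)])
  fix t assume t: "t \<in> {a..c}"
  show "w t = x + integral {a..t} (\<lambda>s. f (w s))"
  proof (cases "t \<le> b")
    case True
    then have "integral {a..t} (\<lambda>s. f (w s)) = integral {a..t} (\<lambda>s. f (u s))"
      by (intro integral_cong) (auto simp: w_def)
    with True t u(2)[of t] show ?thesis by (simp add: w_def)
  next
    case False
    have integrable_w: "(\<lambda>s. f (w s)) integrable_on {a..t}"
      by (intro integrable_continuous_real continuous_on_compose2[OF continuous_on_field
          continuous_on_subset[OF w]]) (use t in auto)
    have "integral {a..t} (\<lambda>s. f (w s))
        = integral {a..b} (\<lambda>s. f (w s)) + integral {b..t} (\<lambda>s. f (w s))"
      using Henstock_Kurzweil_Integration.integral_combine[OF assms(1) _ integrable_w] False by simp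
    also have "integral {a..b} (\<lambda>s. f (w s)) = integral {a..b} (\<lambda>s. f (u s))"
      by (intro integral_cong) (auto simp: w_def)
    also have "integral {b..t} (\<lambda>s. f (w s)) = integral {b..t} (\<lambda>s. f (v s))"
      by (intro integral_cong) (auto simp: w_def vb)
    finally show ?thesis
      using False t u(2)[of b] v(2)[of t] assms(1) by (simp add: w_def algebra_simps)
  qed
qed

primrec stepwise_solution :: "'a \<Rightarrow> nat \<Rightarrow> real \<Rightarrow> 'a" where
  "stepwise_solution x 0 = (\<lambda>_. x)"
| "stepwise_solution x (Suc k) = (\<lambda>t. if t \<le> real k * step then stepwise_solution x k t
     else local_solution (real k * step) (stepwise_solution x k (real k * step)) t)"

lemma stepwise_solution_integral_equation:
  "continuous_on {0..real k * step} (stepwise_solution x k) \<and>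
   (\<forall>t\<in>{0..real k * step}.
      stepwise_solution x k t = x + integral {0..t} (\<lambda>s. f (stepwise_solution x k s)))"
proof (induction k)
  case (Suc k)
  let ?b = "real k * step"
  have "real (Suc k) * step = ?b + step"
    by (simp add: algebra_simps)
  moreover have "stepwise_solution x (Suc k) = (\<lambda>t. if t \<le> ?b then stepwise_solution x k t
      else local_solution ?b (stepwise_solution x k ?b) t)"
    by simp
  ultimately show ?case
    using integral_equation_append[of 0 ?b "?b + step" "stepwise_solution x k" x
        "local_solution ?b (stepwise_solution x k ?b)"] Suc.IH local_solution step_pos
    by auto
qed auto

lemma stepwise_solution_add:
  "s \<le> real k * step \<Longrightarrow> stepwise_solution x (k + j) s = stepwise_solution x k s"
proof (induction j)
  case (Suc j)
  have "real k * step \<le> real (k + j) * step"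
    using step_pos by (intro mult_right_mono) auto
  with Suc show ?case by simp
qed simp

definition flow :: "'a \<Rightarrow> real \<Rightarrow> 'a" where
  "flow x t = stepwise_solution x (nat \<lceil>t / step\<rceil> + 1) t"

lemma less_ceiling_steps: "0 \<le> t \<Longrightarrow> t < real (nat \<lceil>t / step\<rceil> + 1) * step"
proof -
  assume "0 \<le> t"
  then have "t / step \<le> real (nat \<lceil>t / step\<rceil>)"
    by linarith
  with step_pos have "t \<le> real (nat \<lceil>t / step\<rceil>) * step"
    by (simp add: divide_le_eq)
  with step_pos show ?thesis
    by (simp add: algebra_simps)
qed

lemma flow_eq_stepwise_solution:
  assumes "0 \<le> s" "s \<le> real k * step"
  shows "flow x s = stepwise_solution x k s"
proof -
  define N where "N = nat \<lceil>s / step\<rceil> + 1"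
  have "s \<le> real (min N k) * step"
    using less_ceiling_steps[OF assms(1)] assms(2) by (auto simp: N_def min_def)
  then have "stepwise_solution x N s = stepwise_solution x (min N k) s"
    "stepwise_solution x k s = stepwise_solution x (min N k) s"
    using stepwise_solution_add[of s "min N k" x "N - min N k"]
      stepwise_solution_add[of s "min N k" x "k - min N k"] by auto
  then show ?thesis by (simp add: flow_def N_def)
qed

lemma flow_0: "flow x 0 = x"
  by (simp add: flow_def)

lemma flow_has_vector_derivative:
  assumes "0 \<le> t"
  shows "(flow x has_vector_derivative f (flow x t)) (at t within {0..})"
proof -
  define k where "k = nat \<lceil>t / step\<rceil> + 1"
  define b where "b = real k * step"
  define u where "u = stepwise_solution x k"
  have tb: "t < b"
    using less_ceiling_steps[OF assms] by (simp add: b_def k_def)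
  have u: "continuous_on {0..b} u" "\<And>s. s \<in> {0..b} \<Longrightarrow> u s = x + integral {0..s} (\<lambda>s. f (u s))"
    using stepwise_solution_integral_equation[of k x] by (auto simp: u_def b_def)
  have flow_u: "s \<in> {0..b} \<Longrightarrow> flow x s = u s" for s
    using flow_eq_stepwise_solution[of s k x] by (simp add: u_def b_def)
  have "((\<lambda>s. integral {0..s} (\<lambda>s. f (u s))) has_vector_derivative f (u t)) (at t within {0..b})"
    by (rule integral_has_vector_derivative[OF continuous_on_compose2[OF continuous_on_field u(1)]])
      (use assms tb in auto)
  then have "((\<lambda>s. x + integral {0..s} (\<lambda>s. f (u s))) has_vector_derivative f (u t)) (at t within {0..b})"
    using has_vector_derivative_add[OF has_vector_derivative_const] by fastforce
  then have "(flow x has_vector_derivative f (u t)) (at t within {0..b})"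
    by (rule has_vector_derivative_transform_within[where d=1])
      (use assms tb u(2) flow_u in auto)
  moreover have "flow x t = u t"
    using assms tb flow_u by simp
  moreover have "at t within {0..b} = at t within {0..}"
    by (rule at_within_nhd[where S="{-1<..<b}"]) (use assms tb in auto)
  ultimately show ?thesis by simp
qed

end

lemma has_real_derivative_norm_diff_power2:
  fixes u v :: "real \<Rightarrow> 'a::real_inner"
  assumes "(u has_vector_derivative u') (at s)" "(v has_vector_derivative v') (at s)"
  shows "((\<lambda>s. norm (u s - v s)^2) has_real_derivative 2 * inner (u s - v s) (u' - v')) (at s)"
proof -
  have d: "((\<lambda>s. u s - v s) has_derivative (\<lambda>h. h *\<^sub>R (u' - v'))) (at s)"
    using has_vector_derivative_diff[OF assms] by (simp add: has_vector_derivative_def)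
  have "((\<lambda>s. inner (u s - v s) (u s - v s)) has_derivative
      (\<lambda>h. inner (u s - v s) (h *\<^sub>R (u' - v')) + inner (h *\<^sub>R (u' - v')) (u s - v s))) (at s)"
    by (rule has_derivative_inner[OF d d])
  then show ?thesis
    unfolding has_field_derivative_def power2_norm_eq_inner
    by (rule has_derivative_eq_rhs) (simp add: fun_eq_iff inner_commute algebra_simps)
qed

text \<open>Since \<open>|(\<parallel>u - v\<parallel>\<^sup>2)'| \<le> 2L \<parallel>u - v\<parallel>\<^sup>2\<close>, \<open>exp (-2Lt) \<parallel>u - v\<parallel>\<^sup>2\<close> is nonincreasing and
  \<open>exp (2Lt) \<parallel>u - v\<parallel>\<^sup>2\<close> nondecreasing: uniqueness forwards and backwards in time.\<close>
lemma lipschitz_ode_solutions_eq_0_iff: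
  fixes f :: "'a::real_inner \<Rightarrow> 'a" and u v :: "real \<Rightarrow> 'a"
  assumes lip: "L-lipschitz_on UNIV f" and t: "0 \<le> t"
    and u: "continuous_on {0..t} u" "\<And>s. 0 < s \<Longrightarrow> s < t \<Longrightarrow> (u has_vector_derivative f (u s)) (at s)"
    and v: "continuous_on {0..t} v" "\<And>s. 0 < s \<Longrightarrow> s < t \<Longrightarrow> (v has_vector_derivative f (v s)) (at s)"
  shows "u 0 = v 0 \<longleftrightarrow> u t = v t"
proof -
  define N where "N s = norm (u s - v s)^2" for s
  define N' where "N' s = 2 * inner (u s - v s) (f (u s) - f (v s))" for s
  have dN: "(N has_real_derivative N' s) (at s)" if "0 < s" "s < t" for s
    unfolding N_def N'_def by (rule has_real_derivative_norm_diff_power2[OF u(2) v(2)]) (use that in auto)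
  have N'_bound: "\<bar>N' s\<bar> \<le> 2 * L * N s" for s
  proof -
    have "\<bar>inner (u s - v s) (f (u s) - f (v s))\<bar> \<le> norm (u s - v s) * norm (f (u s) - f (v s))"
      by (rule Cauchy_Schwarz_ineq2)
    also have "\<dots> \<le> norm (u s - v s) * (L * norm (u s - v s))"
      using lipschitz_onD[OF lip, of "u s" "v s"] by (intro mult_left_mono) (auto simp: dist_norm)
    finally show ?thesis
      by (simp add: N_def N'_def power2_eq_square abs_mult mult.left_commute)
  qed
  have contN: "continuous_on {0..t} (\<lambda>s. exp (c * s) * N s)" for c
    unfolding N_def using u(1) v(1) by (intro continuous_intros)
  have "exp (- 2 * L * t) * N t \<le> exp (- 2 * L * 0) * N 0"
  proof (rule DERIV_nonpos_imp_decreasing_open[OF t _ contN])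
    fix s assume s: "0 < s" "s < t"
    have "((\<lambda>s. exp (- 2 * L * s) * N s) has_real_derivative
        exp (- 2 * L * s) * (N' s - 2 * L * N s)) (at s)"
      by (rule derivative_eq_intros dN s refl | simp add: algebra_simps)+
    moreover have "exp (- 2 * L * s) * (N' s - 2 * L * N s) \<le> 0"
      using N'_bound[of s] by (intro mult_nonneg_nonpos) auto
    ultimately show "\<exists>y. ((\<lambda>s. exp (- 2 * L * s) * N s) has_real_derivative y) (at s) \<and> y \<le> 0"
      by blast
  qed
  moreover have "exp (2 * L * 0) * N 0 \<le> exp (2 * L * t) * N t"
  proof (rule DERIV_nonneg_imp_increasing_open[OF t _ contN])
    fix s assume s: "0 < s" "s < t"
    have "((\<lambda>s. exp (2 * L * s) * N s) has_real_derivative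
        exp (2 * L * s) * (N' s + 2 * L * N s)) (at s)"
      by (rule derivative_eq_intros dN s refl | simp add: algebra_simps)+
    moreover have "0 \<le> exp (2 * L * s) * (N' s + 2 * L * N s)"
      using N'_bound[of s] by (intro mult_nonneg_nonneg) auto
    ultimately show "\<exists>y. ((\<lambda>s. exp (2 * L * s) * N s) has_real_derivative y) (at s) \<and> 0 \<le> y"
      by blast
  qed
  moreover have "0 \<le> N s" for s
    by (simp add: N_def)
  ultimately have "N 0 = 0 \<longleftrightarrow> N t = 0"
    by (smt (verit) exp_gt_zero mult_pos_pos mult_nonneg_nonneg mult_eq_0_iff exp_zero)
  then show ?thesis
    by (simp add: N_def)
qed

section \<open>The initial value problem\<close>

definition vfield :: "real \<times> real \<Rightarrow> real \<times> real" where
  "vfield z = (snd z, Rfun (fst z) - 3 * snd z)"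

lemma lipschitz_vfield: "8-lipschitz_on UNIV vfield"
proof (rule lipschitz_onI)
  fix x y :: "real \<times> real"
  obtain a b where ab: "x - y = (a, b)"
    by (cases "x - y")
  have a: "\<bar>a\<bar> \<le> norm (x - y)" and b: "\<bar>b\<bar> \<le> norm (x - y)"
    using norm_fst_le[where x=a and y=b] norm_snd_le[where x=a and y=b] by (simp_all add: ab)
  have "vfield x - vfield y = (b, (Rfun (fst x) - Rfun (fst y)) - 3 * b)"
    using ab by (auto simp: vfield_def algebra_simps prod_eq_iff)
  then have "norm (vfield x - vfield y) \<le> \<bar>b\<bar> + \<bar>(Rfun (fst x) - Rfun (fst y)) - 3 * b\<bar>"
    using norm_Pair_le by (metis real_norm_def)
  also have "\<dots> \<le> \<bar>b\<bar> + 4 * \<bar>a\<bar> + 3 * \<bar>b\<bar>"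
    using Rfun_lipschitz[of "fst x" "fst y"] ab by (auto simp: prod_eq_iff)
  also have "\<dots> \<le> 8 * norm (x - y)"
    using a b by linarith
  finally show "dist (vfield x) (vfield y) \<le> 8 * dist x y"
    by (simp add: dist_norm)
qed simp

interpretation vfield: lipschitz_field vfield 8
  by unfold_locales (rule lipschitz_vfield)

definition trajectory :: "real \<Rightarrow> real \<Rightarrow> real \<Rightarrow> real \<times> real" where
  "trajectory m n = vfield.flow (m, n)"

lemma is_sol_curve:
  assumes sol: "is_sol m n T V W" and t: "0 \<le> t" "ereal t < T"
  shows "continuous_on {0..t} (\<lambda>s. (V s, W s))"
    and "\<And>s. 0 < s \<Longrightarrow> s < t \<Longrightarrow>
      ((\<lambda>s. (V s, W s)) has_vector_derivative vfield (V s, W s)) (at s)"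
proof -
  have dom: "ereal s < T" if "s \<le> t" for s
    using that t by (meson ereal_less_eq(3) le_less_trans)
  have cont: "continuous (at s within {0..}) (\<lambda>s. (V s, W s))" if "s \<in> {0..t}" for s
  proof (intro continuous_intros)
    have "(V has_real_derivative W s) (at s within {0..})" "continuous (at s within {0..}) W"
      using sol that dom[of s] unfolding is_sol_def by auto
    then show "continuous (at s within {0..}) V" "continuous (at s within {0..}) W"
      by (auto intro: DERIV_continuous)
  qed
  show "continuous_on {0..t} (\<lambda>s. (V s, W s))"
    unfolding continuous_on_eq_continuous_within
    by (auto intro: continuous_within_subset[OF cont])
  fix s assume s: "0 < s" "s < t"
  have "(V has_real_derivative W s) (at s within {0..})"
    "(W has_real_derivative Rfun (V s) - 3 * W s) (at s)"
    using sol s dom[of s] unfolding is_sol_def by auto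
  moreover have "at s within {0..} = at s"
    using s by (intro at_within_interior) auto
  ultimately have "(V has_real_derivative W s) (at s)"
    "(W has_real_derivative Rfun (V s) - 3 * W s) (at s)"
    by simp_all
  then show "((\<lambda>s. (V s, W s)) has_vector_derivative vfield (V s, W s)) (at s)"
    unfolding vfield_def has_real_derivative_iff_has_vector_derivative
    by (auto intro: has_vector_derivative_Pair)
qed

lemma is_sol_initial: "is_sol m n T V W \<Longrightarrow> V 0 = m \<and> W 0 = n"
  unfolding is_sol_def by blast

lemma is_sol_velocity_has_derivative:
  "is_sol m n T V W \<Longrightarrow> 0 < t \<Longrightarrow> ereal t < T \<Longrightarrow>
    (W has_real_derivative Rfun (V t) - 3 * W t) (at t)"
  unfolding is_sol_def by blast

lemma is_sol_unique:
  assumes sol1: "is_sol m n T1 V1 W1" and sol2: "is_sol m n T2 V2 W2"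
    and t: "0 \<le> t" "ereal t < T1" "ereal t < T2"
  shows "V1 t = V2 t \<and> W1 t = W2 t"
  using lipschitz_ode_solutions_eq_0_iff[where u="\<lambda>s. (V1 s, W1 s)" and v="\<lambda>s. (V2 s, W2 s)",
      OF lipschitz_vfield t(1) is_sol_curve[OF sol1 t(1,2)] is_sol_curve[OF sol2 t(1,3)]]
    is_sol_initial[OF sol1] is_sol_initial[OF sol2]
  by simp

lemma is_sol_trajectory: "is_sol m n \<infinity> (\<lambda>t. fst (trajectory m n t)) (\<lambda>t. snd (trajectory m n t))"
proof -
  let ?V = "\<lambda>t. fst (trajectory m n t)" and ?W = "\<lambda>t. snd (trajectory m n t)"
  have d: "(trajectory m n has_vector_derivative vfield (trajectory m n t)) (at t within {0..})"
    if "0 \<le> t" for t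
    unfolding trajectory_def by (rule vfield.flow_has_vector_derivative[OF that])
  have dV: "(?V has_real_derivative ?W t) (at t within {0..})" if "0 \<le> t" for t
    using bounded_linear.has_vector_derivative[OF bounded_linear_fst d[OF that]]
    by (simp add: has_real_derivative_iff_has_vector_derivative vfield_def)
  have dW: "(?W has_real_derivative Rfun (?V t) - 3 * ?W t) (at t within {0..})" if "0 \<le> t" for t
    using bounded_linear.has_vector_derivative[OF bounded_linear_snd d[OF that]]
    by (simp add: has_real_derivative_iff_has_vector_derivative vfield_def)
  have "(?W has_real_derivative Rfun (?V t) - 3 * ?W t) (at t)" if "0 < t" for t
    using dW[of t] at_within_interior[of t "{0..}"] that by simp
  moreover have "trajectory m n 0 = (m, n)"
    by (simp add: trajectory_def vfield.flow_0)
  ultimately show ?thesis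
    unfolding is_sol_def using dV DERIV_continuous[OF dW] by simp
qed

lemma max_sol_trajectory:
  "max_sol m n \<infinity> (\<lambda>t. fst (trajectory m n t)) (\<lambda>t. snd (trajectory m n t))"
proof -
  have "\<forall>t. 0 \<le> t \<and> ereal t < T \<longrightarrow> V t = fst (trajectory m n t) \<and> W t = snd (trajectory m n t)"
    if "is_sol m n T V W" for T V W
    using is_sol_unique[OF that is_sol_trajectory] by simp
  then show ?thesis
    unfolding max_sol_def using is_sol_trajectory by simp
qed

lemma max_sol_eq_trajectory:
  assumes "max_sol m n T V W"
  shows "T = \<infinity>" and "0 \<le> t \<Longrightarrow> V t = fst (trajectory m n t) \<and> W t = snd (trajectory m n t)"
proof -
  have "\<infinity> \<le> T"
    using assms is_sol_trajectory[of m n] unfolding max_sol_def by blast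
  then show "T = \<infinity>"
    by simp
  with assms have "is_sol m n \<infinity> V W"
    by (simp add: max_sol_def)
  then show "0 \<le> t \<Longrightarrow> V t = fst (trajectory m n t) \<and> W t = snd (trajectory m n t)"
    using is_sol_unique[OF _ is_sol_trajectory] by simp
qed

section \<open>Classification of the initial slopes\<close>

lemma is_sol_velocity_becomes_negative:
  assumes sol: "is_sol m n \<infinity> V W" and t0: "0 \<le> t0" "W t0 \<le> 0" "V t0 < -1"
  shows "\<exists>t>t0. W t < 0"
proof -
  have "continuous (at t0 within {0..}) V"
    using sol t0(1) by (auto simp: is_sol_def intro: DERIV_continuous)
  then have "eventually (\<lambda>t. V t < -1) (at t0 within {0..})"
    using t0(3) unfolding continuous_within by (rule order_tendstoD(2))
  then obtain d where d: "0 < d" "\<And>t. t \<in> {0..} \<Longrightarrow> t \<noteq> t0 \<Longrightarrow> dist t t0 < d \<Longrightarrow> V t < -1"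
    unfolding eventually_at by auto
  define t1 where "t1 = t0 + d / 2"
  text \<open>Where \<open>V < -1\<close>, \<open>exp (3t) W\<close> is strictly decreasing: its derivative is \<open>exp (3t) R(V) < 0\<close>.\<close>
  have "exp (3 * t1) * W t1 < exp (3 * t0) * W t0"
  proof (rule DERIV_neg_imp_decreasing_open[where f="\<lambda>t. exp (3 * t) * W t"])
    show "t0 < t1"
      using d by (simp add: t1_def)
    fix t assume t: "t0 < t" "t < t1"
    have "(W has_real_derivative Rfun (V t) - 3 * W t) (at t)"
      using is_sol_velocity_has_derivative[OF sol] t t0(1) by simp
    then have "((\<lambda>t. exp (3 * t) * W t) has_real_derivative exp (3 * t) * Rfun (V t)) (at t)"
      by (auto intro!: derivative_eq_intros simp: algebra_simps)
    moreover have "exp (3 * t) * Rfun (V t) < 0"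
      using d(2)[of t] t t0(1) Rfun_neg by (simp add: t1_def dist_real_def mult_pos_neg)
    ultimately show "\<exists>y. ((\<lambda>t. exp (3 * t) * W t) has_real_derivative y) (at t) \<and> y < 0"
      by blast
  next
    have "continuous_on {0..t1} W"
      using continuous_on_snd[OF is_sol_curve(1)[OF sol, of t1]] t0(1) d(1) by (simp add: t1_def)
    then show "continuous_on {t0..t1} (\<lambda>t. exp (3 * t) * W t)"
      using t0(1) by (intro continuous_intros) (auto elim: continuous_on_subset)
  qed
  also have "\<dots> \<le> 0"
    using t0(2) by (simp add: mult_nonneg_nonpos)
  finally have "W t1 < 0"
    by (simp add: mult_less_0_iff)
  moreover have "t0 < t1"
    using d(1) by (simp add: t1_def)
  ultimately show ?thesis
    by blast
qed

lemma is_sol_velocity_pos: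
  assumes m: "m < -1" and sol: "is_sol m n \<infinity> V W" and nonneg: "\<forall>t>0. 0 \<le> W t" and t: "0 \<le> t"
  shows "0 < W t"
proof (rule ccontr)
  assume "\<not> 0 < W t"
  then have Wt: "W t \<le> 0" by simp
  have "-1 \<le> V t"
  proof (rule ccontr)
    assume "\<not> -1 \<le> V t"
    then obtain s where "t < s" "W s < 0"
      using is_sol_velocity_becomes_negative[OF sol t Wt] by auto
    with nonneg t show False
      by (meson le_less_trans not_le)
  qed
  with m is_sol_initial[OF sol] have "0 < t"
    using t by (cases "t = 0") auto
  with Wt nonneg have W0: "W t = 0"
    by (simp add: order_antisym)
  have dW: "(W has_real_derivative Rfun (V t)) (at t)"
    using is_sol_velocity_has_derivative[OF sol \<open>0 < t\<close>] W0 by simp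
  consider "-1 < V t" | "V t = -1"
    using \<open>-1 \<le> V t\<close> by linarith
  then show False
  proof cases
    case 1
    obtain d where d: "0 < d" "\<And>h. 0 < h \<Longrightarrow> h < d \<Longrightarrow> W (t - h) < W t"
      using DERIV_pos_inc_left[OF dW Rfun_pos[OF 1]] by blast
    define h where "h = min (d / 2) (t / 2)"
    have h: "0 < h" "h < d" "0 < t - h"
      using d(1) \<open>0 < t\<close> by (auto simp: h_def)
    then have "W (t - h) < 0"
      using d(2) W0 by force
    moreover have "0 \<le> W (t - h)"
      using nonneg h(3) by simp
    ultimately show False
      by simp
  next
    case 2
    text \<open>The trajectory would reach the equilibrium \<open>(-1, 0)\<close> in finite time, so it must have started there.\<close>
    have "(V 0, W 0) = (-1, 0) \<longleftrightarrow> (V t, W t) = (-1, 0)"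
      by (rule lipschitz_ode_solutions_eq_0_iff[where u="\<lambda>s. (V s, W s)" and v="\<lambda>_. (-1, 0)",
            OF lipschitz_vfield _ is_sol_curve[OF sol]])
        (use t in \<open>auto simp: vfield_def Rfun_def
          intro!: has_vector_derivative_Pair has_vector_derivative_const\<close>)
    with 2 W0 m is_sol_initial[OF sol] show False
      by simp
  qed
qed

lemma ex_max_sol_trajectory:
  "P \<infinity> (\<lambda>t. fst (trajectory m n t)) (\<lambda>t. snd (trajectory m n t)) \<Longrightarrow>
    \<exists>T V W. max_sol m n T V W \<and> P T V W"
  using max_sol_trajectory by blast

lemma beta_minus_iff: "n \<in> beta_minus m \<longleftrightarrow> (\<exists>t>0. snd (trajectory m n t) < 0)"
proof
  assume "n \<in> beta_minus m"
  then obtain T V W t where "max_sol m n T V W" "0 < t" "W t < 0"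
    unfolding beta_minus_def by blast
  then show "\<exists>t>0. snd (trajectory m n t) < 0"
    using max_sol_eq_trajectory(2)[of m n T V W t] by auto
next
  assume "\<exists>t>0. snd (trajectory m n t) < 0"
  then show "n \<in> beta_minus m"
    unfolding beta_minus_def by (intro CollectI ex_max_sol_trajectory) simp
qed

lemma beta_zero_iff:
  "n \<in> beta_zero m \<longleftrightarrow> (\<forall>t>0. 0 < snd (trajectory m n t) \<and> fst (trajectory m n t) \<le> -1)"
proof
  assume "n \<in> beta_zero m"
  then obtain T V W where "max_sol m n T V W" "\<forall>t>0. ereal t < T \<longrightarrow> 0 < W t \<and> V t \<le> -1"
    unfolding beta_zero_def by blast
  then show "\<forall>t>0. 0 < snd (trajectory m n t) \<and> fst (trajectory m n t) \<le> -1"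
    using max_sol_eq_trajectory[of m n T V W] by auto
next
  assume "\<forall>t>0. 0 < snd (trajectory m n t) \<and> fst (trajectory m n t) \<le> -1"
  then show "n \<in> beta_zero m"
    unfolding beta_zero_def by (intro CollectI ex_max_sol_trajectory) simp
qed

lemma beta_plus_iff:
  "n \<in> beta_plus m \<longleftrightarrow>
    (\<forall>t\<ge>0. 0 < snd (trajectory m n t)) \<and> (\<exists>t>0. -1 < fst (trajectory m n t))"
proof
  assume "n \<in> beta_plus m"
  then obtain T V W t where "max_sol m n T V W" "\<forall>t\<ge>0. ereal t < T \<longrightarrow> 0 < W t"
    "0 < t" "-1 < V t"
    unfolding beta_plus_def by blast
  then show "(\<forall>t\<ge>0. 0 < snd (trajectory m n t)) \<and> (\<exists>t>0. -1 < fst (trajectory m n t))"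
    using max_sol_eq_trajectory[of m n T V W] by auto
next
  assume "(\<forall>t\<ge>0. 0 < snd (trajectory m n t)) \<and> (\<exists>t>0. -1 < fst (trajectory m n t))"
  then show "n \<in> beta_plus m"
    unfolding beta_plus_def by (intro CollectI ex_max_sol_trajectory) simp
qed

theorem lemma4p1:
  fixes m :: real
  assumes "m < -1"
  shows "UNIV = beta_minus m \<union> beta_zero m \<union> beta_plus m \<and>
         beta_minus m \<inter> beta_zero m = {} \<and>
         beta_minus m \<inter> beta_plus m = {} \<and>
         beta_zero m \<inter> beta_plus m = {}"
proof (intro conjI)
  show "UNIV = beta_minus m \<union> beta_zero m \<union> beta_plus m"
  proof (intro set_eqI iffI UnCI)
    fix n :: real
    assume "n \<notin> beta_plus m" "n \<notin> beta_zero m"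
    then have "\<not> (\<forall>t\<ge>0. 0 < snd (trajectory m n t))"
      unfolding beta_zero_iff beta_plus_iff by (meson not_le less_imp_le)
    then show "n \<in> beta_minus m"
      unfolding beta_minus_iff using is_sol_velocity_pos[OF assms is_sol_trajectory] by (meson not_le)
  qed simp
  show "beta_minus m \<inter> beta_zero m = {}"
    by (fastforce simp: beta_minus_iff beta_zero_iff)
  show "beta_minus m \<inter> beta_plus m = {}"
    by (fastforce simp: beta_minus_iff beta_plus_iff dest: less_imp_le)
  show "beta_zero m \<inter> beta_plus m = {}"
    by (fastforce simp: beta_zero_iff beta_plus_iff)
qed

end
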